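(* Let $Y$, $Z$ be bigraphs and $f,g: Y\to Z$ bigraph homomorphisms which are $\times$-homotopic. Then for every bigraph $X$ the induced order-preserving maps $f_*, g_*: \mathrm{Hom}_{/K_2}(X,Y)\to \mathrm{Hom}_{/K_2}(X,Z)$, given by $(f_*\eta)(v)=f(\eta(v))$, are homotopic (as maps of geometric realizations).
   Context: A graph is a set $V$ with a symmetric relation $E\subset V\times V$ (loops allowed); $K_2$ has vertices $0,1$ and edges $(0,1),(1,0)$. A bigraph is a graph $X$ with a graph homomorphism $\varepsilon_X: X\to K_2$; $V_i(X)=\varepsilon_X^{-1}(i)$; bigraph homomorphisms are graph homomorphisms commuting with colorings. A multi-homomorphism $\eta$ from $X$ to $Y$ assigns to each $v\in V(X)$ a finite nonempty subset $\eta(v)\subset V(Y)$ such that $(v,w)\in E(X)$ implies $\eta(v)\times\eta(w)\subset E(Y)$; it is 2-colored if $\eta(v)\subset V_i(Y)$ for $v\in V_i(X)$. $\mathrm{Hom}_{/K_2}(X,Y)$ is the poset of 2-colored multi-homomorphisms ordered by $\eta\le\eta'$ iff $\eta(v)\subset\eta'(v)$ for all $v$; a bigraph homomorphism is identified with the multi-homomorphism $v\mapsto\{f(v)\}$. Bigraph homomorphisms $f,g:Y\to Z$ are $\times$-homotopic if they lie in the same connected component of $\mathrm{Hom}_{/K_2}(Y,Z)$. Posets are regarded as spaces via geometric realizations of order complexes. *)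

theory Defs
  imports "HOL-Analysis.Analysis"
begin

definition is_graph :: "'a set \<Rightarrow> ('a \<times> 'a) set \<Rightarrow> bool" where
  "is_graph V E \<longleftrightarrow> E \<subseteq> V \<times> V \<and> sym E"

definition graph_hom :: "'a set \<Rightarrow> ('a \<times> 'a) set \<Rightarrow> 'b set \<Rightarrow> ('b \<times> 'b) set \<Rightarrow> ('a \<Rightarrow> 'b) \<Rightarrow> bool" where
  "graph_hom V E V' E' f \<longleftrightarrow> (\<forall>v\<in>V. f v \<in> V') \<and> (\<forall>(v,w)\<in>E. (f v, f w) \<in> E')"

definition K2_vertices :: "nat set" where "K2_vertices = {0, 1}"
definition K2_edges :: "(nat \<times> nat) set" where "K2_edges = {(0,1), (1,0)}"

definition bigraph :: "'a set \<Rightarrow> ('a \<times> 'a) set \<Rightarrow> ('a \<Rightarrow> nat) \<Rightarrow> bool" where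
  "bigraph V E c \<longleftrightarrow> is_graph V E \<and> graph_hom V E K2_vertices K2_edges c"

definition bigraph_hom ::
  "'a set \<Rightarrow> ('a \<times> 'a) set \<Rightarrow> ('a \<Rightarrow> nat) \<Rightarrow> 'b set \<Rightarrow> ('b \<times> 'b) set \<Rightarrow> ('b \<Rightarrow> nat) \<Rightarrow> ('a \<Rightarrow> 'b) \<Rightarrow> bool" where
  "bigraph_hom VX EdX cX VY EdY cY f \<longleftrightarrow> graph_hom VX EdX VY EdY f \<and> (\<forall>v\<in>VX. cY (f v) = cX v)"

text \<open>2-colored multi-homomorphisms; values outside the vertex set are fixed to be empty
  so that each multi-homomorphism has a unique representation.\<close>
definition multi_hom2 ::
  "'a set \<Rightarrow> ('a \<times> 'a) set \<Rightarrow> ('a \<Rightarrow> nat) \<Rightarrow> 'b set \<Rightarrow> ('b \<times> 'b) set \<Rightarrow> ('b \<Rightarrow> nat) \<Rightarrow> ('a \<Rightarrow> 'b set) \<Rightarrow> bool" where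
  "multi_hom2 VX EdX cX VY EdY cY \<eta> \<longleftrightarrow>
     (\<forall>v\<in>VX. finite (\<eta> v) \<and> \<eta> v \<noteq> {} \<and> \<eta> v \<subseteq> VY \<and> (\<forall>w\<in>\<eta> v. cY w = cX v)) \<and>
     (\<forall>(v,w)\<in>EdX. \<eta> v \<times> \<eta> w \<subseteq> EdY) \<and>
     (\<forall>v. v \<notin> VX \<longrightarrow> \<eta> v = {})"

definition Hom2 ::
  "'a set \<Rightarrow> ('a \<times> 'a) set \<Rightarrow> ('a \<Rightarrow> nat) \<Rightarrow> 'b set \<Rightarrow> ('b \<times> 'b) set \<Rightarrow> ('b \<Rightarrow> nat) \<Rightarrow> ('a \<Rightarrow> 'b set) set" where
  "Hom2 VX EdX cX VY EdY cY = {\<eta>. multi_hom2 VX EdX cX VY EdY cY \<eta>}"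

definition hom_le :: "('a \<Rightarrow> 'b set) \<Rightarrow> ('a \<Rightarrow> 'b set) \<Rightarrow> bool" where
  "hom_le \<eta> \<eta>' \<longleftrightarrow> (\<forall>v. \<eta> v \<subseteq> \<eta>' v)"

definition sing_hom :: "'a set \<Rightarrow> ('a \<Rightarrow> 'b) \<Rightarrow> ('a \<Rightarrow> 'b set)" where
  "sing_hom V f = (\<lambda>v. if v \<in> V then {f v} else {})"

definition push :: "('b \<Rightarrow> 'c) \<Rightarrow> ('a \<Rightarrow> 'b set) \<Rightarrow> ('a \<Rightarrow> 'c set)" where
  "push f \<eta> = (\<lambda>v. f ` \<eta> v)"

definition is_chain :: "('p \<Rightarrow> 'p \<Rightarrow> bool) \<Rightarrow> 'p set \<Rightarrow> bool" where
  "is_chain le S \<longleftrightarrow> (\<forall>x\<in>S. \<forall>y\<in>S. le x y \<or> le y x)"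

definition supp_r :: "('p \<Rightarrow> real) \<Rightarrow> 'p set" where
  "supp_r \<alpha> = {p. \<alpha> p \<noteq> 0}"

definition real_carrier :: "'p set \<Rightarrow> ('p \<Rightarrow> 'p \<Rightarrow> bool) \<Rightarrow> ('p \<Rightarrow> real) set" where
  "real_carrier P le = {\<alpha>. finite (supp_r \<alpha>) \<and> supp_r \<alpha> \<subseteq> P \<and> is_chain le (supp_r \<alpha>) \<and>
                         (\<forall>p. 0 \<le> \<alpha> p) \<and> (\<Sum>p\<in>supp_r \<alpha>. \<alpha> p) = 1}"

definition closed_simplex :: "'p set \<Rightarrow> ('p \<Rightarrow> 'p \<Rightarrow> bool) \<Rightarrow> 'p set \<Rightarrow> ('p \<Rightarrow> real) set" where
  "closed_simplex P le \<sigma> = {\<alpha> \<in> real_carrier P le. supp_r \<alpha> \<subseteq> \<sigma>}"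

definition realization :: "'p set \<Rightarrow> ('p \<Rightarrow> 'p \<Rightarrow> bool) \<Rightarrow> ('p \<Rightarrow> real) topology" where
  "realization P le = topology (\<lambda>U. U \<subseteq> real_carrier P le \<and>
     (\<forall>\<sigma>. finite \<sigma> \<and> \<sigma> \<subseteq> P \<and> is_chain le \<sigma> \<longrightarrow>
        openin (top_of_set (closed_simplex P le \<sigma>)) (U \<inter> closed_simplex P le \<sigma>)))"

definition vertex_pt :: "'p \<Rightarrow> ('p \<Rightarrow> real)" where
  "vertex_pt p = (\<lambda>q. if q = p then 1 else 0)"

text \<open>The (affine-linear) realization of a map of posets.\<close>
definition realize_map :: "('p \<Rightarrow> 'q) \<Rightarrow> ('p \<Rightarrow> real) \<Rightarrow> ('q \<Rightarrow> real)" where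
  "realize_map \<phi> \<alpha> = (\<lambda>q. \<Sum>p\<in>{p \<in> supp_r \<alpha>. \<phi> p = q}. \<alpha> p)"

definition x_homotopic ::
  "'b set \<Rightarrow> ('b \<times> 'b) set \<Rightarrow> ('b \<Rightarrow> nat) \<Rightarrow> 'c set \<Rightarrow> ('c \<times> 'c) set \<Rightarrow> ('c \<Rightarrow> nat) \<Rightarrow> ('b \<Rightarrow> 'c) \<Rightarrow> ('b \<Rightarrow> 'c) \<Rightarrow> bool" where
  "x_homotopic VY EdY cY VZ EdZ cZ f g \<longleftrightarrow>
     connected_component_of (realization (Hom2 VY EdY cY VZ EdZ cZ) hom_le)
       (vertex_pt (sing_hom VY f)) (vertex_pt (sing_hom VY g))"

end

theory Submission
  imports Defs
begin

text \<open>A \<open>\<times>\<close>-homotopy from \<open>f\<close> to \<open>g\<close> connects their vertices in the realization of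
  \<open>Hom(Y, Z)\<close>, and connected components of the realization of a poset are those of its
  comparability graph; so \<open>{f}\<close> and \<open>{g}\<close> are joined by a zigzag of comparable multi-homomorphisms.
  Post-composition with a multi-homomorphism \<open>\<eta>\<close> is a poset map \<open>Hom(X, Y) \<rightarrow> Hom(X, Z)\<close>,
  monotone in \<open>\<eta>\<close>, and \<open>f\<^sub>*\<close> is post-composition with \<open>{f}\<close>.  Comparable poset maps
  \<open>\<phi> \<le> \<psi>\<close> have homotopic realizations: the homotopy moves the barycentric mass of a point from
  \<open>\<phi>\<close> to \<open>\<psi>\<close>, from the top of its chain downwards, so that the support is always a chain.
  Its continuity is checked simplex by simplex, which is legitimate because \<open>[0, 1]\<close> is
  locally compact.\<close>

section \<open>The topology of the realization\<close>

lemma openin_realization: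
  "openin (realization P le) U \<longleftrightarrow> U \<subseteq> real_carrier P le \<and>
     (\<forall>\<sigma>. finite \<sigma> \<and> \<sigma> \<subseteq> P \<and> is_chain le \<sigma> \<longrightarrow>
        openin (top_of_set (closed_simplex P le \<sigma>)) (U \<inter> closed_simplex P le \<sigma>))"
proof -
  define coherent where "coherent = (\<lambda>U. U \<subseteq> real_carrier P le \<and>
     (\<forall>\<sigma>. finite \<sigma> \<and> \<sigma> \<subseteq> P \<and> is_chain le \<sigma> \<longrightarrow>
        openin (top_of_set (closed_simplex P le \<sigma>)) (U \<inter> closed_simplex P le \<sigma>)))"
  have Int: "coherent (S \<inter> T)" if S: "coherent S" and T: "coherent T" for S T
    unfolding coherent_def
  proof (intro conjI allI impI)
    show "S \<inter> T \<subseteq> real_carrier P le"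
      using S unfolding coherent_def by blast
    fix \<sigma> assume \<sigma>: "finite \<sigma> \<and> \<sigma> \<subseteq> P \<and> is_chain le \<sigma>"
    have "S \<inter> T \<inter> closed_simplex P le \<sigma> = (S \<inter> closed_simplex P le \<sigma>) \<inter> (T \<inter> closed_simplex P le \<sigma>)"
      by blast
    then show "openin (top_of_set (closed_simplex P le \<sigma>)) (S \<inter> T \<inter> closed_simplex P le \<sigma>)"
      using S T \<sigma> unfolding coherent_def by (metis openin_Int)
  qed
  have Union: "coherent (\<Union>K)" if K: "\<forall>S\<in>K. coherent S" for K
    unfolding coherent_def
  proof (intro conjI allI impI)
    show "\<Union>K \<subseteq> real_carrier P le"
      using K unfolding coherent_def by blast
    fix \<sigma> assume \<sigma>: "finite \<sigma> \<and> \<sigma> \<subseteq> P \<and> is_chain le \<sigma>"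
    have "\<Union>K \<inter> closed_simplex P le \<sigma> = \<Union>((\<lambda>S. S \<inter> closed_simplex P le \<sigma>) ` K)"
      by blast
    then show "openin (top_of_set (closed_simplex P le \<sigma>)) (\<Union>K \<inter> closed_simplex P le \<sigma>)"
      using K \<sigma> unfolding coherent_def by (metis (no_types, lifting) imageE openin_Union)
  qed
  have "istopology coherent"
    unfolding istopology_def using Int Union by blast
  then show ?thesis
    unfolding realization_def coherent_def[symmetric] by (simp add: coherent_def)
qed

lemma closed_simplex_subset: "closed_simplex P le \<sigma> \<subseteq> real_carrier P le"
  unfolding closed_simplex_def by blast

lemma closed_simplex_supp:
  assumes "\<alpha> \<in> closed_simplex P le \<sigma>"
  shows "supp_r \<alpha> \<noteq> {}" "supp_r \<alpha> \<subseteq> \<sigma>"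
  using assms unfolding closed_simplex_def real_carrier_def by auto

lemma topspace_realization: "topspace (realization P le) = real_carrier P le"
proof -
  have "openin (realization P le) (real_carrier P le)"
    unfolding openin_realization by (auto simp: Int_absorb1 closed_simplex_subset)
  moreover have "topspace (realization P le) \<subseteq> real_carrier P le"
    using openin_realization[of P le "topspace (realization P le)"] by simp
  ultimately show ?thesis
    using openin_subset by blast
qed

lemma closed_simplex_eq:
  assumes "finite \<tau>" "\<tau> \<subseteq> P" "is_chain le \<tau>"
  shows "closed_simplex P le \<tau> =
    {\<alpha>. (\<forall>q. q \<notin> \<tau> \<longrightarrow> \<alpha> q = 0) \<and> (\<forall>q. 0 \<le> \<alpha> q) \<and> (\<Sum>q\<in>\<tau>. \<alpha> q) = 1}"
    (is "_ = ?S")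
proof (intro set_eqI iffI)
  have sum_supp: "(\<Sum>q\<in>supp_r \<alpha>. \<alpha> q) = (\<Sum>q\<in>\<tau>. \<alpha> q)" if "supp_r \<alpha> \<subseteq> \<tau>" for \<alpha>
    using that assms(1) by (intro sum.mono_neutral_left) (auto simp: supp_r_def)
  fix \<alpha>
  show "\<alpha> \<in> ?S" if "\<alpha> \<in> closed_simplex P le \<tau>"
    using that sum_supp unfolding closed_simplex_def real_carrier_def supp_r_def by auto
  show "\<alpha> \<in> closed_simplex P le \<tau>" if "\<alpha> \<in> ?S"
  proof -
    have supp: "supp_r \<alpha> \<subseteq> \<tau>"
      using that unfolding supp_r_def by auto
    have "is_chain le (supp_r \<alpha>)"
      using supp assms(3) unfolding is_chain_def by blast
    then show ?thesis
      using that supp sum_supp[OF supp] assms(1,2) finite_subset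
      unfolding closed_simplex_def real_carrier_def by auto
  qed
qed

lemma closed_closed_simplex:
  assumes "finite \<tau>" "\<tau> \<subseteq> P" "is_chain le \<tau>"
  shows "closed (closed_simplex P le \<tau>)"
proof -
  have eval: "continuous_on UNIV (\<lambda>\<alpha>::'a \<Rightarrow> real. \<alpha> q)" for q
    by simp
  have "continuous_on UNIV (\<lambda>\<alpha>::'a \<Rightarrow> real. \<Sum>q\<in>\<tau>. \<alpha> q)"
    by (intro continuous_on_sum eval)
  then show ?thesis
    unfolding closed_simplex_eq[OF assms]
    by (intro closed_Collect_conj closed_Collect_all closed_Collect_imp closed_Collect_eq
        closed_Collect_le open_Collect_const eval continuous_on_const)
qed

section \<open>Connected components of the realization\<close>

lemma supp_vertex_pt [simp]: "supp_r (vertex_pt p) = {p}"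
  unfolding supp_r_def vertex_pt_def by auto

definition comparable_in :: "'p set \<Rightarrow> ('p \<Rightarrow> 'p \<Rightarrow> bool) \<Rightarrow> 'p \<Rightarrow> 'p \<Rightarrow> bool" where
  "comparable_in P le x y \<longleftrightarrow> x \<in> P \<and> y \<in> P \<and> (le x y \<or> le y x)"

lemma openin_realization_supp_subset:
  assumes "\<And>\<sigma>. \<sigma> \<subseteq> P \<Longrightarrow> is_chain le \<sigma> \<Longrightarrow> \<sigma> \<subseteq> C \<or> \<sigma> \<inter> C = {}"
  shows "openin (realization P le) {\<alpha> \<in> real_carrier P le. supp_r \<alpha> \<subseteq> C}"
  unfolding openin_realization
proof (intro conjI allI impI)
  fix \<sigma> assume \<sigma>: "finite \<sigma> \<and> \<sigma> \<subseteq> P \<and> is_chain le \<sigma>"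
  let ?U = "{\<alpha> \<in> real_carrier P le. supp_r \<alpha> \<subseteq> C}"
  from assms \<sigma> consider "\<sigma> \<subseteq> C" | "\<sigma> \<inter> C = {}" by blast
  then show "openin (top_of_set (closed_simplex P le \<sigma>)) (?U \<inter> closed_simplex P le \<sigma>)"
  proof cases
    case 1
    then have "?U \<inter> closed_simplex P le \<sigma> = closed_simplex P le \<sigma>"
      using closed_simplex_subset closed_simplex_supp(2) by blast
    then show ?thesis by simp
  next
    case 2
    then have "?U \<inter> closed_simplex P le \<sigma> = {}"
      using closed_simplex_supp by blast
    then show ?thesis by simp
  qed
qed auto

lemma closedin_realization_supp_subset:
  assumes chain_side: "\<And>\<sigma>. \<sigma> \<subseteq> P \<Longrightarrow> is_chain le \<sigma> \<Longrightarrow> \<sigma> \<subseteq> C \<or> \<sigma> \<inter> C = {}"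
  shows "closedin (realization P le) {\<alpha> \<in> real_carrier P le. supp_r \<alpha> \<subseteq> C}"
proof -
  have "openin (realization P le) {\<alpha> \<in> real_carrier P le. supp_r \<alpha> \<subseteq> P - C}"
  proof (rule openin_realization_supp_subset)
    show "\<sigma> \<subseteq> P - C \<or> \<sigma> \<inter> (P - C) = {}" if "\<sigma> \<subseteq> P" "is_chain le \<sigma>" for \<sigma>
      using chain_side[OF that] that(1) by auto
  qed
  moreover have "supp_r \<alpha> \<subseteq> P - C \<longleftrightarrow> \<not> supp_r \<alpha> \<subseteq> C" if "\<alpha> \<in> real_carrier P le" for \<alpha>
  proof -
    have "supp_r \<alpha> \<noteq> {}" "supp_r \<alpha> \<subseteq> P" "is_chain le (supp_r \<alpha>)"
      using that unfolding real_carrier_def by auto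
    then show ?thesis
      using chain_side[of "supp_r \<alpha>"] by auto
  qed
  then have "topspace (realization P le) - {\<alpha> \<in> real_carrier P le. supp_r \<alpha> \<subseteq> C} =
      {\<alpha> \<in> real_carrier P le. supp_r \<alpha> \<subseteq> P - C}"
    unfolding topspace_realization by auto
  ultimately show ?thesis
    unfolding closedin_def topspace_realization by simp
qed

text \<open>Each simplex lies on one side of the set of elements reachable from \<open>a\<close> by comparabilities,
  so the points supported there form a clopen set.\<close>
lemma connected_component_of_vertex_pt_imp_comparable:
  assumes "connected_component_of (realization P le) (vertex_pt a) (vertex_pt b)"
  shows "(comparable_in P le)\<^sup>*\<^sup>* a b"
proof -
  define C where "C = {y. (comparable_in P le)\<^sup>*\<^sup>* a y}"
  have chain_side: "\<sigma> \<subseteq> C \<or> \<sigma> \<inter> C = {}" if "\<sigma> \<subseteq> P" "is_chain le \<sigma>" for \<sigma>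
  proof (cases "\<sigma> \<inter> C = {}")
    case False
    then obtain x where "x \<in> \<sigma>" "x \<in> C" by blast
    moreover have "comparable_in P le x y" if "y \<in> \<sigma>" for y
      using that \<open>x \<in> \<sigma>\<close> \<open>\<sigma> \<subseteq> P\<close> \<open>is_chain le \<sigma>\<close>
      unfolding comparable_in_def is_chain_def by blast
    ultimately have "y \<in> C" if "y \<in> \<sigma>" for y
      using that unfolding C_def by (simp add: rtranclp.rtrancl_into_rtrancl)
    then show ?thesis by blast
  qed simp
  let ?U = "{\<alpha> \<in> real_carrier P le. supp_r \<alpha> \<subseteq> C}"
  have open_U: "openin (realization P le) ?U"
    using chain_side by (rule openin_realization_supp_subset)
  have closed_U: "closedin (realization P le) ?U"
    using chain_side by (rule closedin_realization_supp_subset)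
  obtain T where T: "connectedin (realization P le) T" "vertex_pt a \<in> T" "vertex_pt b \<in> T"
    using assms unfolding connected_component_of_def by blast
  then have "vertex_pt a \<in> real_carrier P le"
    using connectedin_subset_topspace[OF T(1)] unfolding topspace_realization by auto
  then have "vertex_pt a \<in> ?U"
    unfolding C_def by simp
  then have "T \<subseteq> ?U"
    using connectedin_clopen_cases[OF T(1) closed_U open_U] T(2) by (auto simp: disjnt_def)
  then have "vertex_pt b \<in> ?U"
    using T(3) by blast
  then show ?thesis
    unfolding C_def by simp
qed

section \<open>Continuous maps into and out of the realization\<close>

text \<open>A finite subcomplex is a finite union of closed simplices, each closed in the function space.\<close>
lemma openin_realization_restrict_finite:
  assumes "finite S" "S \<subseteq> Q" and U: "openin (realization Q le) U"
  obtains W where "open W"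
    "U \<inter> {\<beta> \<in> real_carrier Q le. supp_r \<beta> \<subseteq> S} = W \<inter> {\<beta> \<in> real_carrier Q le. supp_r \<beta> \<subseteq> S}"
proof -
  define K where "K = {\<tau>. \<tau> \<subseteq> S \<and> is_chain le \<tau>}"
  have "K \<subseteq> Pow S"
    unfolding K_def by blast
  then have finite_K: "finite K"
    using assms(1) finite_subset by blast
  have K: "finite \<tau>" "\<tau> \<subseteq> Q" "is_chain le \<tau>" if "\<tau> \<in> K" for \<tau>
  proof -
    have "\<tau> \<subseteq> S" "is_chain le \<tau>"
      using that unfolding K_def by auto
    then show "finite \<tau>" "\<tau> \<subseteq> Q" "is_chain le \<tau>"
      using assms(1,2) rev_finite_subset by auto
  qed
  have subcomplex: "{\<beta> \<in> real_carrier Q le. supp_r \<beta> \<subseteq> S} = (\<Union>\<tau>\<in>K. closed_simplex Q le \<tau>)"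
  proof (intro set_eqI iffI)
    fix \<beta> assume "\<beta> \<in> {\<beta> \<in> real_carrier Q le. supp_r \<beta> \<subseteq> S}"
    then have "supp_r \<beta> \<in> K" "\<beta> \<in> closed_simplex Q le (supp_r \<beta>)"
      unfolding K_def closed_simplex_def real_carrier_def by auto
    then show "\<beta> \<in> (\<Union>\<tau>\<in>K. closed_simplex Q le \<tau>)"
      by blast
  qed (auto simp: K_def closed_simplex_def)
  have "closed (closed_simplex Q le \<tau> - U)" if \<tau>: "\<tau> \<in> K" for \<tau>
  proof -
    have "openin (top_of_set (closed_simplex Q le \<tau>)) (U \<inter> closed_simplex Q le \<tau>)"
      using U K[OF \<tau>] unfolding openin_realization by blast
    then obtain W' where "open W'" "U \<inter> closed_simplex Q le \<tau> = closed_simplex Q le \<tau> \<inter> W'"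
      unfolding openin_open by blast
    then have "closed_simplex Q le \<tau> - U = closed_simplex Q le \<tau> \<inter> - W'"
      by blast
    then show ?thesis
      using closed_closed_simplex[OF K[OF \<tau>]] \<open>open W'\<close> by (simp add: closed_Int open_closed)
  qed
  then have "closed (\<Union>\<tau>\<in>K. closed_simplex Q le \<tau> - U)"
    using finite_K by (intro closed_UN) auto
  then show ?thesis
    by (rule that[OF open_Compl]) (unfold subcomplex, blast)
qed

lemma continuous_map_into_realization:
  assumes "finite S" "S \<subseteq> Q" and f: "continuous_map X euclidean f"
    and into: "\<And>x. x \<in> topspace X \<Longrightarrow> f x \<in> real_carrier Q le \<and> supp_r (f x) \<subseteq> S"
  shows "continuous_map X (realization Q le) f"
  unfolding continuous_map_def topspace_realization
proof (intro conjI allI impI)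
  show "f \<in> topspace X \<rightarrow> real_carrier Q le"
    using into by blast
  fix U assume "openin (realization Q le) U"
  then obtain W where W: "open W"
    "U \<inter> {\<beta> \<in> real_carrier Q le. supp_r \<beta> \<subseteq> S} = W \<inter> {\<beta> \<in> real_carrier Q le. supp_r \<beta> \<subseteq> S}"
    using openin_realization_restrict_finite[OF assms(1,2)] by blast
  have "f x \<in> U \<longleftrightarrow> f x \<in> W" if "x \<in> topspace X" for x
    using into[OF that] W(2) by (simp add: set_eq_iff) blast
  then have "{x \<in> topspace X. f x \<in> U} = {x \<in> topspace X. f x \<in> W}"
    by blast
  then show "openin X {x \<in> topspace X. f x \<in> U}"
    using openin_continuous_map_preimage[OF f] W(1) by simp
qed

lemma openin_realization_tube:
  assumes slices: "\<And>\<sigma>. finite \<sigma> \<Longrightarrow> \<sigma> \<subseteq> P \<Longrightarrow> is_chain le \<sigma> \<Longrightarrow>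
      openin (prod_topology X (top_of_set (closed_simplex P le \<sigma>)))
        (G \<inter> (topspace X \<times> closed_simplex P le \<sigma>))"
    and N: "compactin X N"
  shows "openin (realization P le) {\<alpha> \<in> real_carrier P le. N \<times> {\<alpha>} \<subseteq> G}"
  unfolding openin_realization
proof (intro conjI allI impI)
  fix \<sigma> assume \<sigma>: "finite \<sigma> \<and> \<sigma> \<subseteq> P \<and> is_chain le \<sigma>"
  let ?V = "{\<alpha> \<in> real_carrier P le. N \<times> {\<alpha>} \<subseteq> G}"
  let ?G\<sigma> = "G \<inter> (topspace X \<times> closed_simplex P le \<sigma>)"
  show "openin (top_of_set (closed_simplex P le \<sigma>)) (?V \<inter> closed_simplex P le \<sigma>)"
    unfolding openin_subopen[of _ "?V \<inter> closed_simplex P le \<sigma>"]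
  proof
    fix \<alpha> assume \<alpha>: "\<alpha> \<in> ?V \<inter> closed_simplex P le \<sigma>"
    have G\<sigma>: "openin (prod_topology X (top_of_set (closed_simplex P le \<sigma>))) ?G\<sigma>"
      using \<sigma> by (intro slices) auto
    have \<alpha>_top: "\<alpha> \<in> topspace (top_of_set (closed_simplex P le \<sigma>))"
      using \<alpha> by simp
    have "N \<times> {\<alpha>} \<subseteq> G" "N \<subseteq> topspace X"
      using \<alpha> compactin_subset_topspace[OF N] by auto
    then have "N \<times> {\<alpha>} \<subseteq> ?G\<sigma>"
      using \<alpha> by auto
    then obtain U V where
      V: "openin (top_of_set (closed_simplex P le \<sigma>)) V" "\<alpha> \<in> V" "N \<subseteq> U" "U \<times> V \<subseteq> ?G\<sigma>"
      using tube_lemma_left[OF G\<sigma> N \<alpha>_top] by auto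
    have "N \<times> V \<subseteq> G" "V \<subseteq> closed_simplex P le \<sigma>"
      using V(3,4) openin_subset[OF V(1)] by auto
    then have "V \<subseteq> ?V \<inter> closed_simplex P le \<sigma>"
      using closed_simplex_subset by blast
    then show "\<exists>T. openin (top_of_set (closed_simplex P le \<sigma>)) T \<and> \<alpha> \<in> T \<and> T \<subseteq> ?V \<inter> closed_simplex P le \<sigma>"
      using V by blast
  qed
qed auto

text \<open>With \<open>X\<close> locally compact Hausdorff, \<open>X \<times> |P|\<close> carries the topology coherent with the
  products \<open>X \<times> \<Delta>\<close> of closed simplices: around \<open>(x, \<alpha>)\<close> take a compact neighbourhood \<open>N\<close>
  of \<open>x\<close>; by the tube lemma on every simplex, the \<open>\<alpha>\<close> with \<open>N \<times> {\<alpha>} \<subseteq> G\<close> form an open set.\<close>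
lemma openin_prod_realization:
  assumes X: "locally_compact_space X" "Hausdorff_space X"
    and G: "G \<subseteq> topspace X \<times> real_carrier P le"
    and slices: "\<And>\<sigma>. finite \<sigma> \<Longrightarrow> \<sigma> \<subseteq> P \<Longrightarrow> is_chain le \<sigma> \<Longrightarrow>
      openin (prod_topology X (top_of_set (closed_simplex P le \<sigma>)))
        (G \<inter> (topspace X \<times> closed_simplex P le \<sigma>))"
  shows "openin (prod_topology X (realization P le)) G"
  unfolding openin_prod_topology_alt
proof (intro allI impI)
  fix x \<alpha> assume x\<alpha>: "(x, \<alpha>) \<in> G"
  define \<sigma> where "\<sigma> = supp_r \<alpha>"
  have \<alpha>: "\<alpha> \<in> real_carrier P le"
    using x\<alpha> G by blast
  then have \<sigma>: "finite \<sigma>" "\<sigma> \<subseteq> P" "is_chain le \<sigma>" and \<alpha>_\<sigma>: "\<alpha> \<in> closed_simplex P le \<sigma>"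
    unfolding \<sigma>_def real_carrier_def closed_simplex_def by auto
  have "(x, \<alpha>) \<in> G \<inter> (topspace X \<times> closed_simplex P le \<sigma>)"
    using x\<alpha> G \<alpha>_\<sigma> by auto
  then obtain A B where A: "openin X A" "x \<in> A" and B: "\<alpha> \<in> B"
    and AB: "A \<times> B \<subseteq> G \<inter> (topspace X \<times> closed_simplex P le \<sigma>)"
    using slices[OF \<sigma>] unfolding openin_prod_topology_alt by meson
  have "neighbourhood_base_of (compactin X) X"
    using X locally_compact_space_neighbourhood_base by blast
  then obtain U N where U: "openin X U" "x \<in> U" "U \<subseteq> N" and N: "compactin X N" "N \<subseteq> A"
    using A unfolding neighbourhood_base_of by meson
  let ?V = "{\<beta> \<in> real_carrier P le. N \<times> {\<beta>} \<subseteq> G}"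
  have "openin (realization P le) ?V"
    using slices N(1) by (rule openin_realization_tube)
  moreover have "\<alpha> \<in> ?V"
    using \<alpha> B N(2) AB by blast
  moreover have "U \<times> ?V \<subseteq> G"
    using U(3) by blast
  ultimately show "\<exists>U V. openin X U \<and> openin (realization P le) V \<and> x \<in> U \<and> \<alpha> \<in> V \<and> U \<times> V \<subseteq> G"
    using U(1,2) by blast
qed

lemma continuous_map_prod_realization:
  assumes X: "locally_compact_space X" "Hausdorff_space X"
    and h: "h \<in> topspace X \<times> real_carrier P le \<rightarrow> topspace Y"
    and slices: "\<And>\<sigma>. finite \<sigma> \<Longrightarrow> \<sigma> \<subseteq> P \<Longrightarrow> is_chain le \<sigma> \<Longrightarrow>
      continuous_map (prod_topology X (top_of_set (closed_simplex P le \<sigma>))) Y h"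
  shows "continuous_map (prod_topology X (realization P le)) Y h"
  unfolding continuous_map_def topspace_prod_topology topspace_realization
proof (intro conjI allI impI h)
  fix W assume W: "openin Y W"
  let ?G = "{z \<in> topspace X \<times> real_carrier P le. h z \<in> W}"
  show "openin (prod_topology X (realization P le)) ?G"
  proof (rule openin_prod_realization[OF X])
    fix \<sigma> assume \<sigma>: "finite \<sigma>" "\<sigma> \<subseteq> P" "is_chain le \<sigma>"
    have "?G \<inter> (topspace X \<times> closed_simplex P le \<sigma>) =
      {z \<in> topspace (prod_topology X (top_of_set (closed_simplex P le \<sigma>))). h z \<in> W}"
      using closed_simplex_subset by auto
    then show "openin (prod_topology X (top_of_set (closed_simplex P le \<sigma>)))
        (?G \<inter> (topspace X \<times> closed_simplex P le \<sigma>))"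
      using openin_continuous_map_preimage[OF slices[OF \<sigma>] W] by simp
  qed auto
qed

section \<open>Comparable poset maps have homotopic realizations\<close>

definition mass_above :: "('p \<Rightarrow> 'p \<Rightarrow> bool) \<Rightarrow> 'p set \<Rightarrow> ('p \<Rightarrow> real) \<Rightarrow> 'p \<Rightarrow> real" where
  "mass_above le \<sigma> \<alpha> x = (\<Sum>y\<in>{y \<in> \<sigma>. y \<noteq> x \<and> le x y}. \<alpha> y)"

definition lifted_mass :: "('p \<Rightarrow> 'p \<Rightarrow> bool) \<Rightarrow> 'p set \<Rightarrow> ('p \<Rightarrow> real) \<Rightarrow> real \<Rightarrow> 'p \<Rightarrow> real" where
  "lifted_mass le \<sigma> \<alpha> t x = max 0 (min (\<alpha> x) (t - mass_above le \<sigma> \<alpha> x))"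

text \<open>At time \<open>t\<close> a total mass \<open>t\<close> of \<open>\<alpha>\<close> has been moved from \<open>\<phi>\<close> to \<open>\<psi>\<close>, starting at the top of the
  chain \<open>\<sigma>\<close>: the mass at \<open>x\<close> moves only once everything above \<open>x\<close> has moved.  Hence the points
  still at \<open>\<phi>\<close> lie below those already at \<open>\<psi>\<close>, and the support stays a chain.\<close>
definition stair ::
  "('p \<Rightarrow> 'p \<Rightarrow> bool) \<Rightarrow> ('p \<Rightarrow> 'q) \<Rightarrow> ('p \<Rightarrow> 'q) \<Rightarrow> 'p set \<Rightarrow> real \<Rightarrow> ('p \<Rightarrow> real) \<Rightarrow> 'q \<Rightarrow> real" where
  "stair le \<phi> \<psi> \<sigma> t \<alpha> q = (\<Sum>x\<in>{x \<in> \<sigma>. \<psi> x = q}. lifted_mass le \<sigma> \<alpha> t x)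
     + (\<Sum>x\<in>{x \<in> \<sigma>. \<phi> x = q}. \<alpha> x - lifted_mass le \<sigma> \<alpha> t x)"

lemma stair_supp_eq:
  assumes "finite \<sigma>" "supp_r \<alpha> \<subseteq> \<sigma>"
  shows "stair le \<phi> \<psi> \<sigma> t \<alpha> = stair le \<phi> \<psi> (supp_r \<alpha>) t \<alpha>"
proof -
  have zero: "\<alpha> x = 0" if "x \<notin> supp_r \<alpha>" for x
    using that unfolding supp_r_def by simp
  have "mass_above le \<sigma> \<alpha> x = mass_above le (supp_r \<alpha>) \<alpha> x" for x
    unfolding mass_above_def using assms zero by (intro sum.mono_neutral_right) auto
  then have lifted: "lifted_mass le \<sigma> \<alpha> t x = lifted_mass le (supp_r \<alpha>) \<alpha> t x" for x
    unfolding lifted_mass_def by simp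
  have lifted_zero: "lifted_mass le (supp_r \<alpha>) \<alpha> t x = 0"
    and remaining_zero: "\<alpha> x - lifted_mass le (supp_r \<alpha>) \<alpha> t x = 0" if "x \<notin> supp_r \<alpha>" for x
    unfolding lifted_mass_def using zero[OF that] by simp_all
  show ?thesis
  proof
    fix q
    have "(\<Sum>x\<in>{x \<in> \<sigma>. \<psi> x = q}. lifted_mass le \<sigma> \<alpha> t x)
        = (\<Sum>x\<in>{x \<in> supp_r \<alpha>. \<psi> x = q}. lifted_mass le (supp_r \<alpha>) \<alpha> t x)"
      unfolding lifted using assms lifted_zero by (intro sum.mono_neutral_right) auto
    moreover have "(\<Sum>x\<in>{x \<in> \<sigma>. \<phi> x = q}. \<alpha> x - lifted_mass le \<sigma> \<alpha> t x)
        = (\<Sum>x\<in>{x \<in> supp_r \<alpha>. \<phi> x = q}. \<alpha> x - lifted_mass le (supp_r \<alpha>) \<alpha> t x)"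
      unfolding lifted using assms remaining_zero by (intro sum.mono_neutral_right) auto
    ultimately show "stair le \<phi> \<psi> \<sigma> t \<alpha> q = stair le \<phi> \<psi> (supp_r \<alpha>) t \<alpha> q"
      unfolding stair_def by simp
  qed
qed

lemma continuous_on_stair:
  "continuous_on UNIV (\<lambda>z::real \<times> ('p \<Rightarrow> real). stair le \<phi> \<psi> \<sigma> (fst z) (snd z))"
proof -
  have coord: "continuous_on UNIV (\<lambda>z::real \<times> ('p \<Rightarrow> real). snd z x)" for x
    by (rule continuous_on_product_then_coordinatewise[OF continuous_on_snd[OF continuous_on_id]])
  show ?thesis
    unfolding stair_def lifted_mass_def mass_above_def
    by (rule continuous_on_coordinatewise_then_product) (intro continuous_intros coord)
qed

locale monotone_le_maps =
  fixes P :: "'p set" and le :: "'p \<Rightarrow> 'p \<Rightarrow> bool"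
    and Q :: "'q set" and le' :: "'q \<Rightarrow> 'q \<Rightarrow> bool"
    and \<phi> \<psi> :: "'p \<Rightarrow> 'q"
  assumes trans: "\<And>x y z. x \<in> P \<Longrightarrow> y \<in> P \<Longrightarrow> z \<in> P \<Longrightarrow> le x y \<Longrightarrow> le y z \<Longrightarrow> le x z"
    and antisym: "\<And>x y. x \<in> P \<Longrightarrow> y \<in> P \<Longrightarrow> le x y \<Longrightarrow> le y x \<Longrightarrow> x = y"
    and trans': "\<And>x y z. x \<in> Q \<Longrightarrow> y \<in> Q \<Longrightarrow> z \<in> Q \<Longrightarrow> le' x y \<Longrightarrow> le' y z \<Longrightarrow> le' x z"
    and maps_\<phi>: "\<And>x. x \<in> P \<Longrightarrow> \<phi> x \<in> Q"
    and maps_\<psi>: "\<And>x. x \<in> P \<Longrightarrow> \<psi> x \<in> Q"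
    and mono_\<phi>: "\<And>x y. x \<in> P \<Longrightarrow> y \<in> P \<Longrightarrow> le x y \<Longrightarrow> le' (\<phi> x) (\<phi> y)"
    and mono_\<psi>: "\<And>x y. x \<in> P \<Longrightarrow> y \<in> P \<Longrightarrow> le x y \<Longrightarrow> le' (\<psi> x) (\<psi> y)"
    and \<phi>_le_\<psi>: "\<And>x. x \<in> P \<Longrightarrow> le' (\<phi> x) (\<psi> x)"
begin

context
  fixes \<sigma> \<alpha>
  assumes \<sigma>: "finite \<sigma>" "\<sigma> \<subseteq> P" "is_chain le \<sigma>"
    and \<alpha>: "\<alpha> \<in> closed_simplex P le \<sigma>"
begin

lemma coord_nonneg: "0 \<le> \<alpha> x"
  and coord_sum: "(\<Sum>x\<in>\<sigma>. \<alpha> x) = 1"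
  using \<alpha> unfolding closed_simplex_eq[OF \<sigma>] by auto

lemma mass_above_step:
  assumes x: "x \<in> \<sigma>" and y: "y \<in> \<sigma>" and "x \<noteq> y" "le x y"
  shows "\<alpha> y + mass_above le \<sigma> \<alpha> y \<le> mass_above le \<sigma> \<alpha> x"
proof -
  have "z \<noteq> x \<and> le x z" if "z \<in> \<sigma>" "z \<noteq> y" "le y z" for z
  proof -
    have "x \<in> P" "y \<in> P" "z \<in> P"
      using x y that(1) \<sigma>(2) by auto
    then show ?thesis
      using trans[of x y z] antisym[of x y] assms(3,4) that(2,3) by auto
  qed
  then have "insert y {z \<in> \<sigma>. z \<noteq> y \<and> le y z} \<subseteq> {z \<in> \<sigma>. z \<noteq> x \<and> le x z}"
    using assms by auto
  then have "(\<Sum>z\<in>insert y {z \<in> \<sigma>. z \<noteq> y \<and> le y z}. \<alpha> z) \<le> mass_above le \<sigma> \<alpha> x"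
    unfolding mass_above_def using \<sigma>(1) coord_nonneg by (intro sum_mono2) auto
  then show ?thesis
    unfolding mass_above_def using \<sigma>(1) by (subst (asm) sum.insert) auto
qed

lemma mass_above_le_one:
  assumes "x \<in> \<sigma>"
  shows "\<alpha> x + mass_above le \<sigma> \<alpha> x \<le> 1"
proof -
  have "\<alpha> x + mass_above le \<sigma> \<alpha> x = (\<Sum>y\<in>insert x {y \<in> \<sigma>. y \<noteq> x \<and> le x y}. \<alpha> y)"
    unfolding mass_above_def using \<sigma>(1) by (subst sum.insert) auto
  also have "\<dots> \<le> (\<Sum>y\<in>\<sigma>. \<alpha> y)"
    using assms \<sigma>(1) coord_nonneg by (intro sum_mono2) auto
  finally show ?thesis
    using coord_sum by simp
qed

lemma lifted_mass_bounds: "0 \<le> lifted_mass le \<sigma> \<alpha> t x" "lifted_mass le \<sigma> \<alpha> t x \<le> \<alpha> x"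
  unfolding lifted_mass_def using coord_nonneg[of x] by auto

lemma lifted_mass_nonzero: "lifted_mass le \<sigma> \<alpha> t x \<noteq> 0 \<Longrightarrow> mass_above le \<sigma> \<alpha> x < t"
  and remaining_mass_nonzero: "\<alpha> x - lifted_mass le \<sigma> \<alpha> t x \<noteq> 0 \<Longrightarrow> t < mass_above le \<sigma> \<alpha> x + \<alpha> x"
  unfolding lifted_mass_def using coord_nonneg[of x] by (auto simp: max_def min_def split: if_splits)

lemma stair_nonzero:
  assumes "stair le \<phi> \<psi> \<sigma> t \<alpha> q \<noteq> 0"
  shows "(\<exists>x\<in>\<sigma>. \<psi> x = q \<and> lifted_mass le \<sigma> \<alpha> t x \<noteq> 0)
       \<or> (\<exists>x\<in>\<sigma>. \<phi> x = q \<and> \<alpha> x - lifted_mass le \<sigma> \<alpha> t x \<noteq> 0)"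
  using assms unfolding stair_def by (metis (mono_tags, lifting) add.right_neutral mem_Collect_eq sum.neutral)

lemma supp_stair: "supp_r (stair le \<phi> \<psi> \<sigma> t \<alpha>) \<subseteq> \<phi> ` \<sigma> \<union> \<psi> ` \<sigma>"
  using stair_nonzero unfolding supp_r_def by blast

lemma stair_chain: "is_chain le' (supp_r (stair le \<phi> \<psi> \<sigma> t \<alpha>))"
proof -
  have comparable: "le a b \<or> le b a" if "a \<in> \<sigma>" "b \<in> \<sigma>" for a b
    using \<sigma>(3) that unfolding is_chain_def by blast
  have same_map: "le' (f a) (f b) \<or> le' (f b) (f a)"
    if "f = \<phi> \<or> f = \<psi>" "a \<in> \<sigma>" "b \<in> \<sigma>" for f a b
    using comparable[of a b] mono_\<phi>[of a b] mono_\<phi>[of b a] mono_\<psi>[of a b] mono_\<psi>[of b a] that \<sigma>(2)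
    by blast
  have remaining_below_lifted: "le' (\<phi> a) (\<psi> b)"
    if a: "a \<in> \<sigma>" "\<alpha> a - lifted_mass le \<sigma> \<alpha> t a \<noteq> 0"
      and b: "b \<in> \<sigma>" "lifted_mass le \<sigma> \<alpha> t b \<noteq> 0" for a b
  proof (cases "le a b")
    case True
    then show ?thesis
      using mono_\<phi>[of a b] \<phi>_le_\<psi>[of b] trans'[of "\<phi> a" "\<phi> b" "\<psi> b"] maps_\<phi> maps_\<psi> a b \<sigma>(2) by blast
  next
    case False
    then have "b \<noteq> a" "le b a"
      using comparable a b by blast+
    then have "\<alpha> a + mass_above le \<sigma> \<alpha> a \<le> mass_above le \<sigma> \<alpha> b"
      using mass_above_step a b by blast
    then show ?thesis
      using lifted_mass_nonzero[OF b(2)] remaining_mass_nonzero[OF a(2)] by simp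
  qed
  show ?thesis
    unfolding is_chain_def
  proof (intro ballI)
    fix q1 q2 assume "q1 \<in> supp_r (stair le \<phi> \<psi> \<sigma> t \<alpha>)" "q2 \<in> supp_r (stair le \<phi> \<psi> \<sigma> t \<alpha>)"
    then have "stair le \<phi> \<psi> \<sigma> t \<alpha> q1 \<noteq> 0" "stair le \<phi> \<psi> \<sigma> t \<alpha> q2 \<noteq> 0"
      unfolding supp_r_def by auto
    then show "le' q1 q2 \<or> le' q2 q1"
      using stair_nonzero same_map remaining_below_lifted by metis
  qed
qed

lemma stair_sum: "(\<Sum>q\<in>supp_r (stair le \<phi> \<psi> \<sigma> t \<alpha>). stair le \<phi> \<psi> \<sigma> t \<alpha> q) = 1"
proof -
  let ?T = "\<phi> ` \<sigma> \<union> \<psi> ` \<sigma>"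
  let ?H = "stair le \<phi> \<psi> \<sigma> t \<alpha>"
  have "(\<Sum>q\<in>supp_r ?H. ?H q) = (\<Sum>q\<in>?T. ?H q)"
    using supp_stair \<sigma>(1) by (intro sum.mono_neutral_left) (auto simp: supp_r_def)
  also have "\<dots> = (\<Sum>q\<in>?T. \<Sum>x\<in>{x \<in> \<sigma>. \<psi> x = q}. lifted_mass le \<sigma> \<alpha> t x)
      + (\<Sum>q\<in>?T. \<Sum>x\<in>{x \<in> \<sigma>. \<phi> x = q}. \<alpha> x - lifted_mass le \<sigma> \<alpha> t x)"
    unfolding stair_def by (simp add: sum.distrib)
  also have "\<dots> = (\<Sum>x\<in>\<sigma>. lifted_mass le \<sigma> \<alpha> t x) + (\<Sum>x\<in>\<sigma>. \<alpha> x - lifted_mass le \<sigma> \<alpha> t x)"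
    using \<sigma>(1) by (simp add: sum.group)
  also have "\<dots> = 1"
    using coord_sum by (simp add: sum.distrib[symmetric])
  finally show ?thesis .
qed

lemma stair_in_real_carrier: "stair le \<phi> \<psi> \<sigma> t \<alpha> \<in> real_carrier Q le'"
proof -
  have "supp_r (stair le \<phi> \<psi> \<sigma> t \<alpha>) \<subseteq> Q"
    using supp_stair maps_\<phi> maps_\<psi> \<sigma>(2) by blast
  moreover have "finite (supp_r (stair le \<phi> \<psi> \<sigma> t \<alpha>))"
    using supp_stair \<sigma>(1) finite_subset by blast
  moreover have "0 \<le> stair le \<phi> \<psi> \<sigma> t \<alpha> q" for q
    unfolding stair_def using lifted_mass_bounds by (intro add_nonneg_nonneg sum_nonneg) auto
  ultimately show ?thesis
    unfolding real_carrier_def using stair_chain stair_sum by blast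
qed

lemma stair_0: "stair le \<phi> \<psi> \<sigma> 0 \<alpha> = realize_map \<phi> \<alpha>"
proof
  fix q
  have "lifted_mass le \<sigma> \<alpha> 0 x = 0" for x
  proof -
    have "0 \<le> mass_above le \<sigma> \<alpha> x"
      unfolding mass_above_def using coord_nonneg by (simp add: sum_nonneg)
    then show ?thesis
      unfolding lifted_mass_def using coord_nonneg[of x] by (auto simp: max_def min_def)
  qed
  moreover have "supp_r \<alpha> \<subseteq> \<sigma>"
    using closed_simplex_supp(2)[OF \<alpha>] .
  ultimately show "stair le \<phi> \<psi> \<sigma> 0 \<alpha> q = realize_map \<phi> \<alpha> q"
    unfolding stair_def realize_map_def using \<sigma>(1)
    by (simp, intro sum.mono_neutral_right) (auto simp: supp_r_def)
qed

lemma stair_1: "stair le \<phi> \<psi> \<sigma> 1 \<alpha> = realize_map \<psi> \<alpha>"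
proof
  fix q
  have "lifted_mass le \<sigma> \<alpha> 1 x = \<alpha> x" if "x \<in> \<sigma>" for x
    unfolding lifted_mass_def using mass_above_le_one[OF that] coord_nonneg[of x] by simp
  moreover have "supp_r \<alpha> \<subseteq> \<sigma>"
    using closed_simplex_supp(2)[OF \<alpha>] .
  ultimately show "stair le \<phi> \<psi> \<sigma> 1 \<alpha> q = realize_map \<psi> \<alpha> q"
    unfolding stair_def realize_map_def using \<sigma>(1)
    by (simp, intro sum.mono_neutral_right) (auto simp: supp_r_def)
qed

end

lemma stair_supp_in_real_carrier:
  assumes "\<alpha> \<in> real_carrier P le"
  shows "stair le \<phi> \<psi> (supp_r \<alpha>) t \<alpha> \<in> real_carrier Q le'"
  using assms by (intro stair_in_real_carrier) (auto simp: real_carrier_def closed_simplex_def)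

text \<open>The homotopy uses the support of \<open>\<alpha>\<close> as its chain, which is not continuous in \<open>\<alpha>\<close>; on a
  closed simplex it agrees with the formula for the fixed chain \<open>\<sigma>\<close>.\<close>
lemma continuous_map_stair_slice:
  assumes \<sigma>: "finite \<sigma>" "\<sigma> \<subseteq> P" "is_chain le \<sigma>"
  shows "continuous_map (prod_topology (top_of_set {0..1}) (top_of_set (closed_simplex P le \<sigma>)))
    (realization Q le') (\<lambda>z. stair le \<phi> \<psi> (supp_r (snd z)) (fst z) (snd z))"
proof (rule continuous_map_into_realization)
  let ?D = "{0..1} \<times> closed_simplex P le \<sigma>"
  have on_slice: "stair le \<phi> \<psi> \<sigma> (fst z) (snd z) = stair le \<phi> \<psi> (supp_r (snd z)) (fst z) (snd z)"
    if "z \<in> ?D" for z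
  proof -
    have "snd z \<in> closed_simplex P le \<sigma>"
      using that by auto
    then have "supp_r (snd z) \<subseteq> \<sigma>"
      by (rule closed_simplex_supp(2))
    then show ?thesis
      by (rule stair_supp_eq[OF \<sigma>(1)])
  qed
  have "continuous_on ?D (\<lambda>z. stair le \<phi> \<psi> (supp_r (snd z)) (fst z) (snd z))"
    using continuous_on_subset[OF continuous_on_stair subset_UNIV] on_slice by (rule continuous_on_eq)
  then show "continuous_map (prod_topology (top_of_set {0..1}) (top_of_set (closed_simplex P le \<sigma>)))
      euclidean (\<lambda>z. stair le \<phi> \<psi> (supp_r (snd z)) (fst z) (snd z))"
    by simp
  show "finite (\<phi> ` \<sigma> \<union> \<psi> ` \<sigma>)" "\<phi> ` \<sigma> \<union> \<psi> ` \<sigma> \<subseteq> Q"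
    using \<sigma> maps_\<phi> maps_\<psi> by auto
  fix z assume "z \<in> topspace (prod_topology (top_of_set {0..1::real}) (top_of_set (closed_simplex P le \<sigma>)))"
  then have z: "z \<in> ?D" and snd_z: "snd z \<in> closed_simplex P le \<sigma>"
    by auto
  then show "stair le \<phi> \<psi> (supp_r (snd z)) (fst z) (snd z) \<in> real_carrier Q le' \<and>
      supp_r (stair le \<phi> \<psi> (supp_r (snd z)) (fst z) (snd z)) \<subseteq> \<phi> ` \<sigma> \<union> \<psi> ` \<sigma>"
    unfolding on_slice[OF z, symmetric]
    using stair_in_real_carrier[OF \<sigma> snd_z] supp_stair[OF \<sigma> snd_z] by blast
qed

lemma realize_map_homotopic:
  "homotopic_with (\<lambda>_. True) (realization P le) (realization Q le') (realize_map \<phi>) (realize_map \<psi>)"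
proof -
  let ?h = "\<lambda>z. stair le \<phi> \<psi> (supp_r (snd z)) (fst z) (snd z)"
  have "compact_space (top_of_set {0..1::real})"
    by (simp add: compact_space_subtopology)
  then have "locally_compact_space (top_of_set {0..1::real})"
    by (rule compact_imp_locally_compact_space)
  then have "continuous_map (prod_topology (top_of_set {0..1}) (realization P le)) (realization Q le') ?h"
    using continuous_map_stair_slice stair_supp_in_real_carrier
    by (intro continuous_map_prod_realization Hausdorff_space_subtopology) (auto simp: topspace_realization)
  then have homotopy: "homotopic_with (\<lambda>_. True) (realization P le) (realization Q le')
      (\<lambda>\<alpha>. stair le \<phi> \<psi> (supp_r \<alpha>) 0 \<alpha>) (\<lambda>\<alpha>. stair le \<phi> \<psi> (supp_r \<alpha>) 1 \<alpha>)"
    unfolding homotopic_with_def by (intro exI[of _ ?h]) auto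
  have ends: "realize_map \<phi> \<alpha> = stair le \<phi> \<psi> (supp_r \<alpha>) 0 \<alpha>"
    "realize_map \<psi> \<alpha> = stair le \<phi> \<psi> (supp_r \<alpha>) 1 \<alpha>"
    if "\<alpha> \<in> topspace (realization P le)" for \<alpha>
    using that by (auto simp: topspace_realization real_carrier_def closed_simplex_def
        intro!: stair_0[symmetric] stair_1[symmetric])
  from homotopy ends show ?thesis
    by (rule homotopic_with_eq) auto
qed

end

section \<open>Composition of multi-homomorphisms\<close>

definition mhom_comp :: "('b \<Rightarrow> 'c set) \<Rightarrow> ('a \<Rightarrow> 'b set) \<Rightarrow> 'a \<Rightarrow> 'c set" where
  "mhom_comp \<eta> \<alpha> v = (\<Union>y\<in>\<alpha> v. \<eta> y)"

lemma hom_le_refl: "hom_le \<eta> \<eta>"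
  unfolding hom_le_def by simp

lemma hom_le_trans: "hom_le \<eta> \<eta>' \<Longrightarrow> hom_le \<eta>' \<eta>'' \<Longrightarrow> hom_le \<eta> \<eta>''"
  unfolding hom_le_def by blast

lemma hom_le_antisym: "hom_le \<eta> \<eta>' \<Longrightarrow> hom_le \<eta>' \<eta> \<Longrightarrow> \<eta> = \<eta>'"
  unfolding hom_le_def by (auto intro!: ext)

lemma mhom_comp_mono_left: "hom_le \<eta> \<eta>' \<Longrightarrow> hom_le (mhom_comp \<eta> \<alpha>) (mhom_comp \<eta>' \<alpha>)"
  unfolding hom_le_def mhom_comp_def by blast

lemma mhom_comp_mono_right: "hom_le \<alpha> \<alpha>' \<Longrightarrow> hom_le (mhom_comp \<eta> \<alpha>) (mhom_comp \<eta> \<alpha>')"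
  unfolding hom_le_def mhom_comp_def by blast

lemma mhom_comp_vertex:
  assumes \<eta>: "\<eta> \<in> Hom2 VY EdY cY VZ EdZ cZ" and \<alpha>: "\<alpha> \<in> Hom2 VX EdX cX VY EdY cY" and v: "v \<in> VX"
  shows "finite (mhom_comp \<eta> \<alpha> v) \<and> mhom_comp \<eta> \<alpha> v \<noteq> {} \<and> mhom_comp \<eta> \<alpha> v \<subseteq> VZ \<and>
    (\<forall>w\<in>mhom_comp \<eta> \<alpha> v. cZ w = cX v)"
proof -
  have \<alpha>v: "finite (\<alpha> v)" "\<alpha> v \<noteq> {}" "\<alpha> v \<subseteq> VY" "\<forall>y\<in>\<alpha> v. cY y = cX v"
    using \<alpha> v unfolding Hom2_def multi_hom2_def by auto
  have \<eta>y: "finite (\<eta> y)" "\<eta> y \<noteq> {}" "\<eta> y \<subseteq> VZ" "\<forall>w\<in>\<eta> y. cZ w = cY y" if "y \<in> \<alpha> v" for y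
    using \<eta> \<alpha>v(3) that unfolding Hom2_def multi_hom2_def by auto
  obtain y where y: "y \<in> \<alpha> v"
    using \<alpha>v(2) by blast
  have "finite (\<Union>y\<in>\<alpha> v. \<eta> y)"
    using \<alpha>v(1) \<eta>y(1) by simp
  moreover have "(\<Union>y\<in>\<alpha> v. \<eta> y) \<noteq> {}"
    using y \<eta>y(2)[OF y] by blast
  moreover have "(\<Union>y\<in>\<alpha> v. \<eta> y) \<subseteq> VZ"
    using \<eta>y(3) by (rule UN_least)
  moreover have "\<forall>w\<in>(\<Union>y\<in>\<alpha> v. \<eta> y). cZ w = cX v"
    using \<alpha>v(4) \<eta>y(4) by simp
  ultimately show ?thesis
    unfolding mhom_comp_def by blast
qed

lemma mhom_comp_edge:
  assumes \<eta>: "\<eta> \<in> Hom2 VY EdY cY VZ EdZ cZ" and \<alpha>: "\<alpha> \<in> Hom2 VX EdX cX VY EdY cY"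
    and vw: "(v, w) \<in> EdX"
  shows "mhom_comp \<eta> \<alpha> v \<times> mhom_comp \<eta> \<alpha> w \<subseteq> EdZ"
proof
  have \<eta>_edge: "\<eta> y \<times> \<eta> y' \<subseteq> EdZ" if "(y, y') \<in> EdY" for y y'
    using \<eta> that unfolding Hom2_def multi_hom2_def by auto
  have \<alpha>_edge: "\<alpha> v \<times> \<alpha> w \<subseteq> EdY"
    using \<alpha> vw unfolding Hom2_def multi_hom2_def by auto
  fix p assume "p \<in> mhom_comp \<eta> \<alpha> v \<times> mhom_comp \<eta> \<alpha> w"
  then obtain y y' where "y \<in> \<alpha> v" "y' \<in> \<alpha> w" "fst p \<in> \<eta> y" "snd p \<in> \<eta> y'"
    unfolding mhom_comp_def by auto
  moreover have "(y, y') \<in> EdY"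
    using \<alpha>_edge calculation(1,2) by blast
  ultimately show "p \<in> EdZ"
    using \<eta>_edge by (metis mem_Sigma_iff prod.collapse subsetD)
qed

lemma mhom_comp_in_Hom2:
  assumes \<eta>: "\<eta> \<in> Hom2 VY EdY cY VZ EdZ cZ" and \<alpha>: "\<alpha> \<in> Hom2 VX EdX cX VY EdY cY"
  shows "mhom_comp \<eta> \<alpha> \<in> Hom2 VX EdX cX VZ EdZ cZ"
proof -
  have "mhom_comp \<eta> \<alpha> v = {}" if "v \<notin> VX" for v
    using \<alpha> that unfolding Hom2_def multi_hom2_def mhom_comp_def by simp
  then show ?thesis
    using mhom_comp_vertex[OF \<eta> \<alpha>] mhom_comp_edge[OF \<eta> \<alpha>] unfolding Hom2_def multi_hom2_def by blast
qed

lemma realize_map_mhom_comp_homotopic: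
  assumes "\<eta> \<in> Hom2 VY EdY cY VZ EdZ cZ" "\<eta>' \<in> Hom2 VY EdY cY VZ EdZ cZ" "hom_le \<eta> \<eta>'"
  shows "homotopic_with (\<lambda>_. True) (realization (Hom2 VX EdX cX VY EdY cY) hom_le)
    (realization (Hom2 VX EdX cX VZ EdZ cZ) hom_le) (realize_map (mhom_comp \<eta>)) (realize_map (mhom_comp \<eta>'))"
proof -
  interpret monotone_le_maps "Hom2 VX EdX cX VY EdY cY" hom_le "Hom2 VX EdX cX VZ EdZ cZ" hom_le
    "mhom_comp \<eta>" "mhom_comp \<eta>'"
    by unfold_locales
      (use assms in \<open>blast intro: hom_le_trans hom_le_antisym mhom_comp_in_Hom2 mhom_comp_mono_left
        mhom_comp_mono_right\<close>)+
  show ?thesis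
    by (rule realize_map_homotopic)
qed

lemma realize_map_mhom_comp_homotopic_rtranclp:
  assumes "\<eta> \<in> Hom2 VY EdY cY VZ EdZ cZ" "(comparable_in (Hom2 VY EdY cY VZ EdZ cZ) hom_le)\<^sup>*\<^sup>* \<eta> \<eta>'"
  shows "homotopic_with (\<lambda>_. True) (realization (Hom2 VX EdX cX VY EdY cY) hom_le)
    (realization (Hom2 VX EdX cX VZ EdZ cZ) hom_le) (realize_map (mhom_comp \<eta>)) (realize_map (mhom_comp \<eta>'))"
  using assms(2)
proof (induction rule: rtranclp_induct)
  case base
  show ?case
    using realize_map_mhom_comp_homotopic[OF assms(1) assms(1) hom_le_refl] .
next
  case (step \<eta>' \<eta>'')
  then have mem: "\<eta>' \<in> Hom2 VY EdY cY VZ EdZ cZ" "\<eta>'' \<in> Hom2 VY EdY cY VZ EdZ cZ"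
    and "hom_le \<eta>' \<eta>'' \<or> hom_le \<eta>'' \<eta>'"
    unfolding comparable_in_def by auto
  then have "homotopic_with (\<lambda>_. True) (realization (Hom2 VX EdX cX VY EdY cY) hom_le)
    (realization (Hom2 VX EdX cX VZ EdZ cZ) hom_le) (realize_map (mhom_comp \<eta>')) (realize_map (mhom_comp \<eta>''))"
  proof (elim disjE)
    assume "hom_le \<eta>' \<eta>''"
    then show ?thesis
      by (rule realize_map_mhom_comp_homotopic[OF mem])
  next
    assume "hom_le \<eta>'' \<eta>'"
    then show ?thesis
      by (rule homotopic_with_symD[OF realize_map_mhom_comp_homotopic[OF mem(2,1)]])
  qed
  with step.IH show ?case
    by (rule homotopic_with_trans)
qed

lemma sing_hom_in_Hom2:
  assumes "bigraph_hom VY EdY cY VZ EdZ cZ f"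
  shows "sing_hom VY f \<in> Hom2 VY EdY cY VZ EdZ cZ"
  using assms unfolding bigraph_hom_def graph_hom_def Hom2_def multi_hom2_def sing_hom_def by auto

lemma mhom_comp_sing_hom:
  assumes "\<alpha> \<in> Hom2 VX EdX cX VY EdY cY"
  shows "mhom_comp (sing_hom VY f) \<alpha> = push f \<alpha>"
proof
  fix v
  have "\<alpha> v \<subseteq> VY"
    using assms unfolding Hom2_def multi_hom2_def by (cases "v \<in> VX") auto
  then show "mhom_comp (sing_hom VY f) \<alpha> v = push f \<alpha> v"
    unfolding mhom_comp_def push_def sing_hom_def by auto
qed

lemma realize_map_cong:
  assumes "\<And>p. p \<in> supp_r \<alpha> \<Longrightarrow> \<phi> p = \<psi> p"
  shows "realize_map \<phi> \<alpha> = realize_map \<psi> \<alpha>"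
proof -
  have "{p \<in> supp_r \<alpha>. \<phi> p = q} = {p \<in> supp_r \<alpha>. \<psi> p = q}" for q
    using assms by auto
  then show ?thesis
    unfolding realize_map_def by simp
qed

lemma realize_map_push_eq_mhom_comp:
  assumes "\<alpha> \<in> real_carrier (Hom2 VX EdX cX VY EdY cY) hom_le"
  shows "realize_map (push f) \<alpha> = realize_map (mhom_comp (sing_hom VY f)) \<alpha>"
proof (rule realize_map_cong)
  fix p assume "p \<in> supp_r \<alpha>"
  then have "p \<in> Hom2 VX EdX cX VY EdY cY"
    using assms unfolding real_carrier_def by blast
  then show "push f p = mhom_comp (sing_hom VY f) p"
    by (rule mhom_comp_sing_hom[symmetric])
qed

theorem lemma3p1:
  fixes VX :: "'a set" and EdX :: "('a \<times> 'a) set" and cX :: "'a \<Rightarrow> nat"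
    and VY :: "'b set" and EdY :: "('b \<times> 'b) set" and cY :: "'b \<Rightarrow> nat"
    and VZ :: "'c set" and EdZ :: "('c \<times> 'c) set" and cZ :: "'c \<Rightarrow> nat"
    and f g :: "'b \<Rightarrow> 'c"
  assumes "bigraph VY EdY cY" and "bigraph VZ EdZ cZ"
    and "bigraph_hom VY EdY cY VZ EdZ cZ f" and "bigraph_hom VY EdY cY VZ EdZ cZ g"
    and "x_homotopic VY EdY cY VZ EdZ cZ f g"
    and "bigraph VX EdX cX"
  shows "homotopic_with (\<lambda>_. True)
           (realization (Hom2 VX EdX cX VY EdY cY) hom_le)
           (realization (Hom2 VX EdX cX VZ EdZ cZ) hom_le)
           (realize_map (push f)) (realize_map (push g))"
proof -
  have "(comparable_in (Hom2 VY EdY cY VZ EdZ cZ) hom_le)\<^sup>*\<^sup>* (sing_hom VY f) (sing_hom VY g)"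
    using assms(5) unfolding x_homotopic_def by (rule connected_component_of_vertex_pt_imp_comparable)
  then have "homotopic_with (\<lambda>_. True) (realization (Hom2 VX EdX cX VY EdY cY) hom_le)
      (realization (Hom2 VX EdX cX VZ EdZ cZ) hom_le)
      (realize_map (mhom_comp (sing_hom VY f))) (realize_map (mhom_comp (sing_hom VY g)))"
    by (rule realize_map_mhom_comp_homotopic_rtranclp[OF sing_hom_in_Hom2[OF assms(3)]])
  then show ?thesis
    by (rule homotopic_with_eq) (auto simp: topspace_realization realize_map_push_eq_mhom_comp)
qed

end
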